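(* Let $p>3$ be a prime and for $1\le k\le p-1$ define $$G(p,k)=\frac{p^2\binom{2p}{p}\binom{2p+2k}{p+k}\binom{2p-2k}{p-k}\binom{p+k}{p}}{2^{8p-2k-4}(2p+2k-1)\binom{2k}{k}}.$$ Then $$\sum_{k=1}^{(p-1)/2}G(p,k)\equiv -p^3E_{p-3}\pmod{p^4}.$$
   Context: $E_n$ denotes the $n$-th Euler number ($E_0=1$, $E_n=-\sum_{k=1}^{\lfloor n/2\rfloor}\binom{n}{2k}E_{n-2k}$ for $n\ge1$). Congruences between rationals modulo $p^m$ mean the difference is $p^m$ times a rational with denominator prime to $p$. *)

theory Defs
  imports Complex_Main "HOL-Computational_Algebra.Primes"
begin

function euler_num :: "nat \<Rightarrow> int" where
  "euler_num n = (if n = 0 then 1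
     else - (\<Sum>k\<in>{1..n div 2}. int (n choose (2*k)) * euler_num (n - 2*k)))"
  by auto
termination
  by (relation "measure id") auto

declare euler_num.simps [simp del]

definition rat_cong :: "rat \<Rightarrow> rat \<Rightarrow> nat \<Rightarrow> nat \<Rightarrow> bool" where
  "rat_cong x y p m \<longleftrightarrow>
     (\<exists>a b :: int. b \<noteq> 0 \<and> \<not> int p dvd b \<and> x - y = of_nat (p ^ m) * (of_int a / of_int b))"

definition G :: "nat \<Rightarrow> nat \<Rightarrow> rat" where
  "G p k = (of_nat (p^2 * ((2*p) choose p) * ((2*p + 2*k) choose (p + k))
               * ((2*p - 2*k) choose (p - k)) * ((p + k) choose p)))
           / (2 ^ (8*p - 2*k - 4) * of_nat (2*p + 2*k - 1) * of_nat ((2*k) choose k))"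

end

theory Submission
  imports Defs "HOL-Number_Theory.Number_Theory"
begin

text \<open>
  Each factorial \<open>(c p + r)!\<close> with \<open>r < p\<close> is \<open>c! p^c\<close> times a unit congruent to \<open>(-1)^c r!\<close>
  (Wilson). Expanding the five binomial coefficients of \<open>G p (j + 1)\<close> this way shows
  \<open>G p (j + 1) = p^3 x\<^sub>j\<close> with \<open>x\<^sub>j \<equiv> -4^j / (C(2j, j) (2j + 1)^2) (mod p)\<close>.
  For \<open>p = 2n + 1\<close> one has \<open>C(2j, j) \<equiv> (-4)^j C(n, j)\<close>, so after reflecting \<open>j \<mapsto> n - j\<close>
  the reduced sum becomes \<open>(-1)^n/4 \<Sum>\<^sub>i (-1)^i / (i^2 C(n, i)) = (-1)^n/4 \<Sum>\<^sub>i (2(-1)^i + 1)/i^2\<close>,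
  and \<open>\<Sum>\<^sub>i 1/i^2 \<equiv> 0\<close>. On the other side, telescoping the Euler polynomial identity
  \<open>E\<^sub>m(x + 1) + E\<^sub>m(x) = 2 x^m\<close> gives \<open>E\<^bsub>p-3\<^esub> \<equiv> 2^(p-2) (-1)^n \<Sum>\<^bsub>i\<le>n\<^esub> (-1)^i i^(p-3)\<close>,
  which by Fermat is \<open>(-1)^n/2 \<Sum>\<^sub>i (-1)^i/i^2\<close> as well.
\<close>

section \<open>Congruences of \<open>p\<close>-integral rationals\<close>

definition p_integral :: "nat \<Rightarrow> rat \<Rightarrow> bool" where
  "p_integral p x \<longleftrightarrow> (\<exists>a b::int. b \<noteq> 0 \<and> \<not> int p dvd b \<and> x = of_int a / of_int b)"

lemma p_integral_of_int_divide: "\<not> int p dvd b \<Longrightarrow> p_integral p (of_int a / of_int b)"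
  unfolding p_integral_def by (rule exI[of _ a], rule exI[of _ b]) auto

lemma p_integral_of_int: "prime p \<Longrightarrow> p_integral p (of_int a)"
  using p_integral_of_int_divide[of p 1 a] by (cases "p = 1") auto

lemma p_integral_add_mult:
  assumes "prime p" "p_integral p x" "p_integral p y"
  shows p_integral_add: "p_integral p (x + y)" and p_integral_mult: "p_integral p (x * y)"
proof -
  obtain a b where ab: "b \<noteq> 0" "\<not> int p dvd b" "x = of_int a / of_int b"
    using assms(2) p_integral_def by auto
  obtain c d where cd: "d \<noteq> 0" "\<not> int p dvd d" "y = of_int c / of_int d"
    using assms(3) p_integral_def by auto
  have "\<not> int p dvd b * d"
    using ab cd assms(1) by (simp add: prime_dvd_mult_iff)
  moreover have "x + y = of_int (a*d + c*b) / of_int (b*d)" "x * y = of_int (a*c) / of_int (b*d)"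
    using ab cd by (simp_all add: field_simps)
  ultimately show "p_integral p (x + y)" "p_integral p (x * y)"
    by (metis p_integral_of_int_divide)+
qed

lemma p_integral_minus: "p_integral p x \<Longrightarrow> p_integral p (- x)"
  unfolding p_integral_def by (metis minus_divide_left of_int_minus)

lemma p_integral_sum:
  "prime p \<Longrightarrow> (\<And>i. i \<in> S \<Longrightarrow> p_integral p (f i)) \<Longrightarrow> p_integral p (\<Sum>i\<in>S. f i)"
  by (induction S rule: infinite_finite_induct)
     (auto simp: p_integral_add p_integral_of_int[of p 0, simplified])

lemma rat_cong_iff_p_integral:
  "rat_cong x y p m \<longleftrightarrow> (\<exists>z. p_integral p z \<and> x - y = of_nat (p^m) * z)"
  unfolding rat_cong_def p_integral_def by blast

lemma rat_cong_refl: "prime p \<Longrightarrow> rat_cong x x p m"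
  unfolding rat_cong_iff_p_integral using p_integral_of_int[of p 0] by (intro exI[of _ 0]) simp

lemma rat_cong_sym: "rat_cong x y p m \<Longrightarrow> rat_cong y x p m"
  unfolding rat_cong_iff_p_integral by (metis minus_diff_eq mult_minus_right p_integral_minus)

lemma rat_cong_add:
  assumes "prime p" "rat_cong x y p m" "rat_cong x' y' p m"
  shows "rat_cong (x + x') (y + y') p m"
proof -
  obtain u v where "p_integral p u" "x - y = of_nat (p^m) * u" "p_integral p v" "x' - y' = of_nat (p^m) * v"
    using assms(2,3) unfolding rat_cong_iff_p_integral by blast
  then show ?thesis
    unfolding rat_cong_iff_p_integral using assms(1)
    by (intro exI[of _ "u + v"]) (auto simp: p_integral_add algebra_simps)
qed

lemma rat_cong_minus: "rat_cong x y p m \<Longrightarrow> rat_cong (- x) (- y) p m"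
  unfolding rat_cong_iff_p_integral by (metis minus_diff_eq minus_diff_minus mult_minus_right p_integral_minus)

lemma rat_cong_trans: "prime p \<Longrightarrow> rat_cong x y p m \<Longrightarrow> rat_cong y z p m \<Longrightarrow> rat_cong x z p m"
  using rat_cong_add[of p x y m y z] unfolding rat_cong_iff_p_integral by (simp add: algebra_simps)

lemma rat_cong_mult:
  assumes "prime p" "rat_cong x y p m" "rat_cong x' y' p m" "p_integral p x" "p_integral p y'"
  shows "rat_cong (x * x') (y * y') p m"
proof -
  obtain u v where uv: "p_integral p u" "x - y = of_nat (p^m) * u" "p_integral p v" "x' - y' = of_nat (p^m) * v"
    using assms(2,3) unfolding rat_cong_iff_p_integral by blast
  have "x * x' - y * y' = x * (x' - y') + (x - y) * y'"
    by (simp add: algebra_simps)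
  also have "\<dots> = of_nat (p^m) * (x * v + u * y')"
    using uv by (simp add: algebra_simps)
  finally show ?thesis
    unfolding rat_cong_iff_p_integral using assms(1,4,5) uv
    by (intro exI[of _ "x * v + u * y'"]) (auto simp: p_integral_add p_integral_mult)
qed

lemma rat_cong_mult_left:
  assumes "prime p" "p_integral p c" "rat_cong x y p m"
  shows "rat_cong (c * x) (c * y) p m"
proof -
  obtain z where "p_integral p z" "x - y = of_nat (p^m) * z"
    using assms(3) unfolding rat_cong_iff_p_integral by blast
  then show ?thesis
    unfolding rat_cong_iff_p_integral using assms(1,2)
    by (intro exI[of _ "c * z"]) (auto simp: p_integral_mult algebra_simps)
qed

lemma rat_cong_sum:
  "prime p \<Longrightarrow> (\<And>i. i \<in> S \<Longrightarrow> rat_cong (f i) (g i) p m) \<Longrightarrow> rat_cong (\<Sum>i\<in>S. f i) (\<Sum>i\<in>S. g i) p m"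
  by (induction S rule: infinite_finite_induct) (auto simp: rat_cong_refl rat_cong_add)

lemma rat_cong_mult_prime_power:
  assumes "rat_cong x y p m"
  shows "rat_cong (of_nat (p^j) * x) (of_nat (p^j) * y) p (m + j)"
proof -
  obtain z where "p_integral p z" "x - y = of_nat (p^m) * z"
    using assms unfolding rat_cong_iff_p_integral by blast
  then show ?thesis
    unfolding rat_cong_iff_p_integral
    by (intro exI[of _ z]) (simp add: power_add right_diff_distrib[symmetric])
qed

lemma rat_cong_of_int:
  assumes "[a = b] (mod int (p^m))" "prime p"
  shows "rat_cong (of_int a) (of_int b) p m"
proof -
  obtain c where "a - b = int (p^m) * c"
    using assms(1) by (meson cong_iff_dvd_diff dvdE)
  then have "of_int a - of_int b = (of_nat (p^m) :: rat) * of_int c"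
    by (metis of_int_diff of_int_mult of_int_of_nat_eq)
  then show ?thesis
    unfolding rat_cong_iff_p_integral using p_integral_of_int[OF assms(2)] by blast
qed

lemma rat_cong_of_int_divide:
  assumes "prime p" "[a * d = c * b] (mod int p)" "\<not> int p dvd b" "\<not> int p dvd d"
  shows "rat_cong (of_int a / of_int b) (of_int c / of_int d) p 1"
proof -
  obtain e where e: "a * d - c * b = int p * e"
    using assms(2) by (metis cong_iff_dvd_diff dvdE)
  have "\<not> int p dvd b * d"
    using assms by (simp add: prime_dvd_mult_iff)
  moreover have "of_int a / of_int b - of_int c / of_int d = of_nat (p^1) * (of_int e / of_int (b * d) :: rat)"
  proof -
    have "b \<noteq> 0" "d \<noteq> 0"
      using assms(3,4) by auto
    moreover have "(of_int a * of_int d - of_int c * of_int b :: rat) = of_nat p * of_int e"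
      using e by (metis of_int_diff of_int_mult of_int_of_nat_eq)
    ultimately show ?thesis
      by (simp add: field_simps)
  qed
  ultimately show ?thesis
    unfolding rat_cong_iff_p_integral using p_integral_of_int_divide by blast
qed

section \<open>Euler numbers modulo an odd number\<close>

lemma euler_num_0 [simp]: "euler_num 0 = 1"
  by (simp add: euler_num.simps)

lemma euler_num_recurrence:
  assumes "s > 0"
  shows "(\<Sum>k\<le>s div 2. int (s choose (2*k)) * euler_num (s - 2*k)) = 0"
proof -
  have "(\<Sum>k\<le>s div 2. int (s choose (2*k)) * euler_num (s - 2*k))
      = euler_num s + (\<Sum>k\<in>{1..s div 2}. int (s choose (2*k)) * euler_num (s - 2*k))"
    by (simp add: atMost_atLeast0 sum.atLeast_Suc_atMost)
  also have "euler_num s = - (\<Sum>k\<in>{1..s div 2}. int (s choose (2*k)) * euler_num (s - 2*k))"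
    using assms by (subst euler_num.simps) simp
  finally show ?thesis
    by simp
qed

lemma sum_atMost_even_indices:
  fixes f :: "nat \<Rightarrow> 'a::comm_monoid_add"
  shows "(\<Sum>i\<le>s. if even i then f i else 0) = (\<Sum>k\<le>s div 2. f (2*k))"
proof (induction s)
  case (Suc s)
  show ?case
  proof (cases "even (Suc s)")
    case True
    then have "Suc s div 2 = Suc (s div 2)" "2 * Suc (s div 2) = Suc s"
      by presburger+
    then show ?thesis
      using Suc True by simp
  next
    case False
    then have "Suc s div 2 = s div 2"
      by presburger
    then show ?thesis
      using Suc False by simp
  qed
qed simp

lemma euler_num_symmetrized_recurrence:
  assumes "s > 0"
  shows "(\<Sum>j\<le>s. int (s choose j) * euler_num j * (1 + (-1)^(s - j))) = 0"
proof -
  have "(\<Sum>j\<le>s. int (s choose j) * euler_num j * (1 + (-1)^(s - j)))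
      = (\<Sum>i\<le>s. int (s choose (s - i)) * euler_num (s - i) * (1 + (-1)^(s - (s - i))))"
    by (rule sum.reindex_bij_witness[where i = "\<lambda>i. s - i" and j = "\<lambda>i. s - i"]) auto
  also have "\<dots> = (\<Sum>i\<le>s. if even i then 2 * (int (s choose i) * euler_num (s - i)) else 0)"
    by (rule sum.cong) (auto simp: binomial_symmetric[symmetric])
  also have "\<dots> = (\<Sum>k\<le>s div 2. 2 * (int (s choose (2*k)) * euler_num (s - 2*k)))"
    by (rule sum_atMost_even_indices)
  also have "\<dots> = 0"
    using euler_num_recurrence[OF assms] by (simp add: sum_distrib_left[symmetric])
  finally show ?thesis .
qed

lemma power_add_one_add_power_diff_one:
  fixes y :: "'a::comm_ring_1"
  shows "(y + 1)^r + (y - 1)^r = (\<Sum>i\<le>r. of_nat (r choose i) * (1 + (-1)^i) * y^(r - i))"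
  using binomial_ring[of 1 y r] binomial_ring[of "-1" y r]
  by (simp add: add.commute sum.distrib[symmetric] algebra_simps)

text \<open>\<open>scaled_euler_poly m y = 2^m E\<^sub>m((y + 1)/2)\<close> for the Euler polynomial \<open>E\<^sub>m\<close>; the shift identity
  below is \<open>E\<^sub>m(x + 1) + E\<^sub>m(x) = 2 x^m\<close>.\<close>

definition scaled_euler_poly :: "nat \<Rightarrow> int \<Rightarrow> int" where
  "scaled_euler_poly m y = (\<Sum>j\<le>m. int (m choose j) * euler_num j * y^(m - j))"

lemma scaled_euler_poly_shift:
  "scaled_euler_poly m (y + 1) + scaled_euler_poly m (y - 1) = 2 * y^m"
proof -
  define F where
    "F j i = int (m choose j) * euler_num j * (int ((m - j) choose i) * (1 + (-1)^i) * y^(m - j - i))" for j i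
  have "scaled_euler_poly m (y + 1) + scaled_euler_poly m (y - 1)
      = (\<Sum>j\<le>m. int (m choose j) * euler_num j * ((y + 1)^(m - j) + (y - 1)^(m - j)))"
    unfolding scaled_euler_poly_def by (simp add: sum.distrib[symmetric] algebra_simps)
  also have "\<dots> = (\<Sum>j\<le>m. \<Sum>i\<le>m - j. F j i)"
    unfolding F_def power_add_one_add_power_diff_one by (simp add: sum_distrib_left)
  also have "\<dots> = (\<Sum>(j, i)\<in>{(j, i). j + i \<le> m}. F j i)"
    by (auto simp: pairs_le_eq_Sigma sum.Sigma)
  also have "\<dots> = (\<Sum>s\<le>m. \<Sum>j\<le>s. F j (s - j))"
    by (rule sum.triangle_reindex_eq)
  also have "\<dots> = (\<Sum>s\<le>m. int (m choose s) * y^(m - s)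
                    * (\<Sum>j\<le>s. int (s choose j) * euler_num j * (1 + (-1)^(s - j))))"
  proof (rule sum.cong[OF refl])
    fix s assume s: "s \<in> {..m}"
    have "F j (s - j) = int (m choose s) * y^(m - s) * (int (s choose j) * euler_num j * (1 + (-1)^(s - j)))"
      if j: "j \<in> {..s}" for j
    proof -
      have "int (m choose j) * int ((m - j) choose (s - j)) = int (m choose s) * int (s choose j)"
        using choose_mult[of j s m] s j by (metis atMost_iff of_nat_mult)
      moreover have "m - j - (s - j) = m - s"
        using s j by simp
      ultimately show ?thesis
        unfolding F_def by (simp add: algebra_simps)
    qed
    then show "(\<Sum>j\<le>s. F j (s - j)) = int (m choose s) * y^(m - s)
                 * (\<Sum>j\<le>s. int (s choose j) * euler_num j * (1 + (-1)^(s - j)))"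
      by (simp add: sum_distrib_left)
  qed
  also have "\<dots> = (\<Sum>s\<le>m. if s = 0 then 2 * y^m else 0)"
    by (rule sum.cong[OF refl]) (auto simp: euler_num_symmetrized_recurrence)
  finally show ?thesis
    by simp
qed

lemma scaled_euler_poly_cong:
  assumes "d dvd y"
  shows "[scaled_euler_poly m y = euler_num m] (mod d)"
proof -
  have "scaled_euler_poly m y = (\<Sum>j<m. int (m choose j) * euler_num j * y^(m - j)) + euler_num m"
    unfolding scaled_euler_poly_def lessThan_Suc_atMost[symmetric] by simp
  moreover have "d dvd (\<Sum>j<m. int (m choose j) * euler_num j * y^(m - j))"
  proof (rule dvd_sum)
    fix j assume "j \<in> {..<m}"
    then have "y dvd y^(m - j)"
      by (simp add: dvd_power)
    then show "d dvd int (m choose j) * euler_num j * y^(m - j)"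
      using assms by (meson dvd_mult dvd_trans)
  qed
  ultimately show ?thesis
    by (simp add: cong_iff_dvd_diff)
qed

lemma sum_alternating_telescope:
  "(\<Sum>k<N. (-1)^k * (h k + h (Suc k))) = h 0 - (-1)^N * (h N :: 'a::comm_ring_1)"
  by (induction N) (auto simp: algebra_simps)

lemma sum_lessThan_odd_fold:
  fixes F :: "nat \<Rightarrow> 'a::comm_monoid_add"
  shows "(\<Sum>k<2*n+1. F k) = F n + (\<Sum>i\<in>{1..n}. F (n - i) + F (n + i))"
proof (induction n arbitrary: F)
  case (Suc n)
  have "(\<Sum>k<2 * Suc n + 1. F k) = (\<Sum>k<Suc (2*n+1). F k) + F (Suc (2*n+1))"
    by simp
  also have "(\<Sum>k<Suc (2*n+1). F k) = F 0 + (\<Sum>k<2*n+1. F (Suc k))"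
    by (rule sum.lessThan_Suc_shift)
  also have "(\<Sum>k<2*n+1. F (Suc k)) = F (Suc n) + (\<Sum>i\<in>{1..n}. F (Suc n - i) + F (Suc n + i))"
    using Suc[of "\<lambda>k. F (Suc k)"] by (simp add: Suc_diff_le)
  also have "(\<Sum>i\<in>{1..Suc n}. F (Suc n - i) + F (Suc n + i))
      = (\<Sum>i\<in>{1..n}. F (Suc n - i) + F (Suc n + i)) + (F 0 + F (Suc (2*n+1)))"
    by (simp add: sum.cl_ivl_Suc mult_2)
  ultimately show ?case
    by (simp add: algebra_simps)
qed simp

lemma sum_alternating_powers_scaled_euler_poly:
  "2 * (\<Sum>k<2*n+1. (-1)^k * (2 * int k - 2 * int n)^m)
     = scaled_euler_poly m (- int (2*n+1)) + scaled_euler_poly m (int (2*n+1))"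
proof -
  define h where "h k = scaled_euler_poly m (2 * int k - int (2*n+1))" for k
  have "h k + h (Suc k) = 2 * (2 * int k - 2 * int n)^m" for k
    using scaled_euler_poly_shift[of m "2 * int k - 2 * int n"]
    unfolding h_def by (simp add: algebra_simps)
  then have "2 * (\<Sum>k<2*n+1. (-1)^k * (2 * int k - 2 * int n)^m) = (\<Sum>k<2*n+1. (-1)^k * (h k + h (Suc k)))"
    by (simp add: sum_distrib_left mult.left_commute)
  also have "\<dots> = h 0 - (-1)^(2*n+1) * h (2*n+1)"
    by (rule sum_alternating_telescope)
  finally show ?thesis
    unfolding h_def by simp
qed

lemma sum_alternating_powers_fold:
  assumes "even m" "m > 0"
  shows "(\<Sum>k<2*n+1. (-1)^k * (2 * int k - 2 * int n)^m)
           = 2^(m+1) * (-1)^n * (\<Sum>i\<in>{1..n}. (-1)^i * int i ^ m)"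
proof -
  define F where "F k = (-1)^k * (2 * int k - 2 * int n)^m" for k
  have "F (n - i) + F (n + i) = 2^(m+1) * (-1)^n * ((-1)^i * int i ^ m)" if i: "i \<le> n" for i
  proof -
    have "(-1::int)^(n - i) = (-1)^(n + i)"
      using i by (simp add: neg_one_power_add_eq_neg_one_power_diff)
    moreover have "(2 * int (n - i) - 2 * int n)^m = (2 * int i)^m"
      using i assms(1) by simp
    moreover have "2 * int (n + i) - 2 * int n = 2 * int i"
      by simp
    ultimately have "F (n - i) + F (n + i) = 2 * ((-1)^(n + i) * (2 * int i)^m)"
      unfolding F_def by simp
    then show ?thesis
      by (simp add: power_add power_mult_distrib)
  qed
  moreover have "F n = 0"
    unfolding F_def using assms(2) by simp
  ultimately show ?thesis
    using sum_lessThan_odd_fold[of F n] unfolding F_def by (simp add: sum_distrib_left)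
qed

lemma euler_num_cong_alternating_power_sum:
  assumes "even m" "m > 0"
  shows "[euler_num m = 2^(m+1) * (-1)^n * (\<Sum>i\<in>{1..n}. (-1)^i * int i ^ m)] (mod int (2*n+1))"
proof -
  have "[scaled_euler_poly m (- int (2*n+1)) + scaled_euler_poly m (int (2*n+1))
          = euler_num m + euler_num m] (mod int (2*n+1))"
    by (intro cong_add scaled_euler_poly_cong dvd_refl iffD2[OF dvd_minus_iff])
  then have "[2 * (2^(m+1) * (-1)^n * (\<Sum>i\<in>{1..n}. (-1)^i * int i ^ m)) = euler_num m + euler_num m] (mod int (2*n+1))"
    unfolding sum_alternating_powers_fold[OF assms, symmetric] sum_alternating_powers_scaled_euler_poly .
  then have "[2 * (2^(m+1) * (-1)^n * (\<Sum>i\<in>{1..n}. (-1)^i * int i ^ m)) = 2 * euler_num m] (mod int (2*n+1))"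
    by (simp only: mult_2[of "euler_num m"])
  moreover have "coprime 2 (int (2*n+1))"
    by (simp add: coprime_commute)
  ultimately show ?thesis
    using cong_mult_lcancel cong_sym by blast
qed

section \<open>Power sums modulo a prime\<close>

lemma rat_cong_inverse_power:
  assumes "prime p" "\<not> p dvd a" "m + k = p - 1"
  shows "rat_cong (1 / of_nat a ^ k) (of_nat a ^ m) p 1"
proof -
  have "[a^(p-1) = 1] (mod p)"
    using fermat_theorem[OF assms(1,2)] .
  then have "[int (a^(p-1)) = int 1] (mod int p)"
    by (simp only: cong_int_iff)
  then have "[1 * 1 = int a ^ m * int a ^ k] (mod int p)"
    unfolding assms(3)[symmetric] power_add by (simp add: cong_sym_eq)
  moreover have "\<not> int p dvd int a ^ k"
  proof -
    have "\<not> int p dvd int a"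
      using assms(2) by simp
    then show ?thesis
      using assms(1) prime_dvd_power[of "int p" "int a" k] by auto
  qed
  moreover have "\<not> int p dvd 1"
    using prime_gt_1_nat[OF assms(1)] by simp
  ultimately have "rat_cong (of_int 1 / of_int (int a ^ k)) (of_int (int a ^ m) / of_int 1) p 1"
    by (rule rat_cong_of_int_divide[OF assms(1)])
  then show ?thesis
    by simp
qed

lemma sum_mod_prime_mult_reindex:
  fixes f :: "nat \<Rightarrow> 'a::comm_monoid_add"
  assumes "prime p" "\<not> p dvd a"
  shows "(\<Sum>i\<in>{1..p-1}. f ((a * i) mod p)) = (\<Sum>i\<in>{1..p-1}. f i)"
proof -
  have cop: "coprime a p"
    using prime_imp_coprime[OF assms] by (simp add: coprime_commute)
  have "(\<lambda>i. (a * i) mod p) ` {1..p-1} \<subseteq> {1..p-1}"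
  proof
    fix x assume "x \<in> (\<lambda>i. (a * i) mod p) ` {1..p-1}"
    then obtain i where i: "i \<in> {1..p-1}" "x = (a * i) mod p"
      by auto
    have "\<not> p dvd i"
      using i by (auto dest: dvd_imp_le)
    then have "\<not> p dvd a * i"
      using assms by (simp add: prime_dvd_mult_iff)
    then have "x \<noteq> 0"
      using i by (simp add: dvd_eq_mod_eq_0)
    moreover have "x < p"
      using i assms(1) by (simp add: prime_gt_0_nat)
    ultimately show "x \<in> {1..p-1}"
      by simp
  qed
  moreover have "inj_on (\<lambda>i. (a * i) mod p) {1..p-1}"
  proof
    fix i j assume i: "i \<in> {1..p-1}" and j: "j \<in> {1..p-1}" and "(a * i) mod p = (a * j) mod p"
    then have "[a * i = a * j] (mod p)"
      by (simp add: cong_def)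
    then have "[i = j] (mod p)"
      using cop by (simp add: cong_mult_lcancel_nat)
    moreover have "i < p" "j < p"
      using i j assms(1) by (auto simp: prime_gt_0_nat)
    ultimately show "i = j"
      by (simp add: cong_def)
  qed
  ultimately have "bij_betw (\<lambda>i. (a * i) mod p) {1..p-1} {1..p-1}"
    by (simp add: bij_betw_def endo_inj_surj)
  then show ?thesis
    by (rule sum.reindex_bij_betw)
qed

text \<open>Multiplying the residues by \<open>a\<close> permutes them, so the power sum \<open>S\<close> satisfies \<open>a^m S \<equiv> S\<close>.\<close>

lemma prime_dvd_power_sum:
  assumes "prime p" "\<not> p dvd a" "\<not> [a^m = 1] (mod p)"
  shows "int p dvd (\<Sum>i\<in>{1..p-1}. int i ^ m)"
proof -
  define S where "S = (\<Sum>i\<in>{1..p-1}. i ^ m)"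
  have "[S = (\<Sum>i\<in>{1..p-1}. (a * i) ^ m)] (mod p)"
    unfolding S_def sum_mod_prime_mult_reindex[OF assms(1,2), of "\<lambda>i. i ^ m", symmetric]
    by (intro cong_sum cong_pow) (simp add: cong_def)
  also have "(\<Sum>i\<in>{1..p-1}. (a * i) ^ m) = a^m * S"
    unfolding S_def by (simp add: power_mult_distrib sum_distrib_left)
  finally have "[a^m * S = 1 * S] (mod p)"
    by (simp add: cong_sym_eq)
  have "\<not> coprime S p"
  proof
    assume "coprime S p"
    then have "[a^m = 1] (mod p)"
      using \<open>[a^m * S = 1 * S] (mod p)\<close> cong_mult_rcancel_nat by blast
    with assms(3) show False ..
  qed
  then have "p dvd S"
    using prime_imp_coprime[OF assms(1), of S] coprime_commute by blast
  then have "int p dvd int S"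
    by simp
  then show ?thesis
    unfolding S_def by (simp add: of_nat_sum)
qed

lemma prime_dvd_power_sum_half:
  assumes "prime p" "p = 2*n+1" "even m" "int p dvd (\<Sum>i\<in>{1..p-1}. int i ^ m)"
  shows "int p dvd (\<Sum>i\<in>{1..n}. int i ^ m)"
proof -
  have "{1..p-1} = {1..n} \<union> {n+1..2*n}"
    using assms(2) by auto
  then have "(\<Sum>i\<in>{1..p-1}. int i ^ m) = (\<Sum>i\<in>{1..n}. int i ^ m) + (\<Sum>i\<in>{n+1..2*n}. int i ^ m)"
    by (simp add: sum.union_disjoint ivl_disj_int_two)
  also have "(\<Sum>i\<in>{n+1..2*n}. int i ^ m) = (\<Sum>i\<in>{1..n}. (int p - int i) ^ m)"
    by (rule sum.reindex_bij_witness[where i = "\<lambda>i. p - i" and j = "\<lambda>i. p - i"]) (use assms(2) in auto)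
  finally have split: "(\<Sum>i\<in>{1..p-1}. int i ^ m)
      = (\<Sum>i\<in>{1..n}. int i ^ m) + (\<Sum>i\<in>{1..n}. (int p - int i) ^ m)" .
  have "[(\<Sum>i\<in>{1..n}. (int p - int i) ^ m) = (\<Sum>i\<in>{1..n}. int i ^ m)] (mod int p)"
  proof (intro cong_sum)
    fix i
    have "[(int p - int i) ^ m = (- int i) ^ m] (mod int p)"
      by (intro cong_pow) (simp add: cong_iff_dvd_diff)
    then show "[(int p - int i) ^ m = int i ^ m] (mod int p)"
      using assms(3) by simp
  qed
  then have "[(\<Sum>i\<in>{1..p-1}. int i ^ m) = 2 * (\<Sum>i\<in>{1..n}. int i ^ m)] (mod int p)"
    unfolding split mult_2 by (rule cong_add_lcancel[THEN iffD2])
  then have "int p dvd 2 * (\<Sum>i\<in>{1..n}. int i ^ m)"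
    using assms(4) cong_dvd_iff by blast
  moreover have "\<not> int p dvd 2"
  proof
    assume "int p dvd 2"
    then have "p \<le> 2"
      using int_dvd_int_iff[of p 2] by (auto dest: dvd_imp_le)
    then show False
      using assms(1,2) by (cases n) auto
  qed
  ultimately show ?thesis
    using assms(1) by (simp add: prime_dvd_mult_iff)
qed

section \<open>Alternating sums of reciprocal binomial coefficients\<close>

lemma inverse_binomial_Suc_left:
  assumes "i \<le> m"
  shows "1 / (of_nat (Suc m choose i) :: rat) = 1 / of_nat (m choose i) - of_nat i / of_nat (Suc m) * (1 / of_nat (m choose i))"
proof -
  have "(of_nat (Suc m) - of_nat i) * (of_nat (Suc m choose i) :: rat) = of_nat (Suc m) * of_nat (m choose i)"
    using binomial_absorb_comp[of "Suc m" i] assms by (metis diff_Suc_1 le_SucI of_nat_diff of_nat_mult)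
  moreover have "(of_nat (m choose i) :: rat) \<noteq> 0" "(of_nat (Suc m choose i) :: rat) \<noteq> 0"
    using assms by auto
  ultimately show ?thesis
    by (simp add: field_simps del: of_nat_Suc binomial_Suc_Suc)
qed

lemma inverse_binomial_eq_sum_Suc:
  assumes "i \<le> k"
  shows "1 / (of_nat (k choose i) :: rat)
           = of_nat (k+1) / of_nat (k+2) * (1 / of_nat (Suc k choose i) + 1 / of_nat (Suc k choose Suc i))"
proof -
  define K C B B' where "K = (of_nat (Suc k) :: rat)" and "C = (of_nat (k choose i) :: rat)"
    and "B = (of_nat (Suc k choose i) :: rat)" and "B' = (of_nat (Suc k choose Suc i) :: rat)"
  have nz: "C \<noteq> 0" "K \<noteq> 0" "K + 1 \<noteq> 0" "B \<noteq> 0" "B' \<noteq> 0"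
    using assms unfolding K_def C_def B_def B'_def by (simp_all del: binomial_Suc_Suc of_nat_Suc)
  have "(K - of_nat i) * B = K * C"
    using binomial_absorb_comp[of "Suc k" i] assms unfolding K_def C_def B_def
    by (metis diff_Suc_1 le_SucI of_nat_diff of_nat_mult)
  then have "1 / B = (K - of_nat i) / (K * C)"
    using nz by (simp add: field_simps)
  moreover have "(of_nat i + 1) * B' = K * C"
    using binomial_absorption[of i "Suc k"] unfolding K_def C_def B'_def
    by (metis diff_Suc_1 of_nat_Suc of_nat_mult add.commute)
  then have "1 / B' = (of_nat i + 1) / (K * C)"
    using nz by (simp add: field_simps)
  ultimately have "K / (K + 1) * (1 / B + 1 / B') = K / (K + 1) * ((K - of_nat i + (of_nat i + 1)) / (K * C))"
    by (simp only: add_divide_distrib)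
  also have "\<dots> = 1 / C"
    using nz by (simp add: divide_simps)
  moreover have "(of_nat (k+1) :: rat) / of_nat (k+2) = K / (K + 1)"
    unfolding K_def by simp
  ultimately show ?thesis
    unfolding K_def C_def B_def B'_def by simp
qed

lemma sum_alternating_inverse_binomial:
  "(\<Sum>i\<le>k. (-1)^i / (of_nat (k choose i) :: rat)) = (1 + (-1)^k) * of_nat (k+1) / of_nat (k+2)"
proof -
  define q where "q i = (-1)^i / (of_nat (Suc k choose i) :: rat)" for i
  have "(\<Sum>i\<le>k. (-1)^i / (of_nat (k choose i) :: rat)) = (\<Sum>i<Suc k. of_nat (k+1) / of_nat (k+2) * (q i - q (Suc i)))"
    unfolding lessThan_Suc_atMost
  proof (intro sum.cong refl)
    fix i assume i: "i \<in> {..k}"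
    have "(-1)^i / (of_nat (k choose i) :: rat) = (-1)^i * (1 / of_nat (k choose i))"
      by simp
    also have "\<dots> = of_nat (k+1) / of_nat (k+2) * ((-1)^i / of_nat (Suc k choose i) - (-1)^Suc i / of_nat (Suc k choose Suc i))"
      unfolding inverse_binomial_eq_sum_Suc[OF i[unfolded atMost_iff]]
      by (simp add: divide_inverse algebra_simps del: binomial_Suc_Suc of_nat_Suc)
    finally show "(-1)^i / (of_nat (k choose i) :: rat) = of_nat (k+1) / of_nat (k+2) * (q i - q (Suc i))"
      unfolding q_def .
  qed
  also have "\<dots> = of_nat (k+1) / of_nat (k+2) * (q 0 - q (Suc k))"
    by (simp only: sum_distrib_left[symmetric] sum_lessThan_telescope')
  finally show ?thesis
    unfolding q_def by simp
qed

lemma sum_alternating_over_binomial_Suc: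
  "(\<Sum>i\<in>{1..Suc m}. (-1)^i * F i / (of_nat (Suc m choose i) :: rat))
     = (\<Sum>i\<in>{1..m}. (-1)^i * F i / of_nat (m choose i))
       - 1 / of_nat (Suc m) * (\<Sum>i\<in>{1..m}. (-1)^i * (of_nat i * F i) / of_nat (m choose i))
       + (-1)^Suc m * F (Suc m)"
proof -
  have "(-1)^i * F i / (of_nat (Suc m choose i) :: rat)
          = (-1)^i * F i / of_nat (m choose i) - 1 / of_nat (Suc m) * ((-1)^i * (of_nat i * F i) / of_nat (m choose i))"
    if "i \<in> {1..m}" for i
  proof -
    have "(-1)^i * F i / (of_nat (Suc m choose i) :: rat) = (-1)^i * F i * (1 / of_nat (Suc m choose i))"
      by simp
    also have "\<dots> = (-1)^i * F i * (1 / of_nat (m choose i) - of_nat i / of_nat (Suc m) * (1 / of_nat (m choose i)))"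
      using that by (subst inverse_binomial_Suc_left) simp_all
    finally show ?thesis
      by (simp add: divide_inverse algebra_simps del: of_nat_Suc)
  qed
  then show ?thesis
    by (simp add: sum.cl_ivl_Suc sum_subtractf sum_distrib_left)
qed

lemma sum_alternating_over_binomial_div:
  "(\<Sum>i\<in>{1..m}. (-1)^i / (of_nat i * of_nat (m choose i) :: rat)) = - (1 - (-1)^m) / of_nat (m+1)"
proof (induction m)
  case (Suc m)
  define M s where "M = (of_nat (Suc m) :: rat)" and "s = (-1::rat)^m"
  have "(\<Sum>i\<in>{1..m}. (-1)^i * (of_nat i * (1 / of_nat i)) / (of_nat (m choose i) :: rat))
          = (\<Sum>i\<le>m. (-1)^i / (of_nat (m choose i) :: rat)) - 1"
    by (simp add: atMost_atLeast0 sum.atLeast_Suc_atMost)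
  also have "\<dots> = (1 + s) * M / (M + 1) - 1"
    unfolding sum_alternating_inverse_binomial M_def s_def by simp
  finally have inner: "(\<Sum>i\<in>{1..m}. (-1)^i * (of_nat i * (1 / of_nat i)) / (of_nat (m choose i) :: rat))
                         = (1 + s) * M / (M + 1) - 1" .
  have IH: "(\<Sum>i\<in>{1..m}. (-1)^i * (1 / of_nat i) / (of_nat (m choose i) :: rat)) = - (1 - s) / M"
    using Suc.IH unfolding M_def s_def by (simp add: divide_inverse mult.assoc)
  have "M \<noteq> 0" "M + 1 \<noteq> 0"
    unfolding M_def by (simp, linarith)
  then have "- (1 - s) / M - 1 / M * ((1 + s) * M / (M + 1) - 1) + (- s) * (1 / M) = - (1 + s) / (M + 1)"
    by (simp add: divide_simps) (simp add: algebra_simps)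
  then show ?case
    using sum_alternating_over_binomial_Suc[of "\<lambda>i. 1 / of_nat i" m]
    unfolding inner IH M_def s_def by (simp add: divide_inverse mult.assoc)
qed simp

lemma sum_alternating_over_binomial_div_square:
  "(\<Sum>i\<in>{1..m}. (-1)^i / (of_nat i ^ 2 * of_nat (m choose i) :: rat)) = (\<Sum>i\<in>{1..m}. (2 * (-1)^i + 1) / of_nat i ^ 2)"
proof (induction m)
  case (Suc m)
  define M s where "M = (of_nat (Suc m) :: rat)" and "s = (-1::rat)^m"
  have inner: "(\<Sum>i\<in>{1..m}. (-1)^i * (of_nat i * (1 / of_nat i ^ 2)) / (of_nat (m choose i) :: rat)) = - (1 - s) / M"
  proof -
    have "(\<Sum>i\<in>{1..m}. (-1)^i * (of_nat i * (1 / of_nat i ^ 2)) / (of_nat (m choose i) :: rat))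
            = (\<Sum>i\<in>{1..m}. (-1)^i / (of_nat i * of_nat (m choose i)))"
      by (rule sum.cong) (auto simp: power2_eq_square)
    then show ?thesis
      unfolding sum_alternating_over_binomial_div M_def s_def by simp
  qed
  have IH: "(\<Sum>i\<in>{1..m}. (-1)^i * (1 / of_nat i ^ 2) / (of_nat (m choose i) :: rat))
              = (\<Sum>i\<in>{1..m}. (2 * (-1)^i + 1) / of_nat i ^ 2)"
    using Suc.IH by (simp add: divide_inverse mult.assoc)
  have "M \<noteq> 0"
    unfolding M_def by simp
  then have "- (1 / M) * (- (1 - s) / M) + (- s) * (1 / M^2) = (2 * (- s) + 1) / M^2"
    by (simp add: divide_simps power2_eq_square)
  then show ?case
    using sum_alternating_over_binomial_Suc[of "\<lambda>i. 1 / of_nat i ^ 2" m]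
    unfolding inner IH M_def s_def by (simp add: sum.cl_ivl_Suc divide_inverse mult.assoc algebra_simps)
qed simp

section \<open>Central binomial coefficients modulo \<open>2n + 1\<close>\<close>

lemma Suc_mult_central_binomial_Suc:
  "Suc j * (Suc (Suc (2*j)) choose Suc j) = 2 * (2*j + 1) * (2*j choose j)"
proof -
  have cancel: "Suc j * A = 2 * (2*j + 1) * C"
    if "Suc j * A = Suc (Suc (2*j)) * B" "Suc j * B = Suc (2*j) * C" for A B C :: nat
  proof -
    have "Suc j * (Suc j * A) = Suc j * (2 * (Suc j * B))"
      using that(1) by simp
    also have "\<dots> = Suc j * (2 * (Suc (2*j) * C))"
      using that(2) by simp
    finally show ?thesis
      by (simp only: mult_left_cancel) simp
  qed
  show ?thesis
  proof (rule cancel)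
    show "Suc j * (Suc (Suc (2*j)) choose Suc j) = Suc (Suc (2*j)) * (Suc (2*j) choose j)"
      using binomial_absorption[of j "Suc (Suc (2*j))"] by (simp del: binomial_Suc_Suc)
    have "(Suc (2*j) - j) * (Suc (2*j) choose j) = Suc (2*j) * (2*j choose j)"
      using binomial_absorb_comp[of "Suc (2*j)" j] by (simp del: binomial_Suc_Suc)
    moreover have "Suc (2*j) - j = Suc j"
      by simp
    ultimately show "Suc j * (Suc (2*j) choose j) = Suc (2*j) * (2*j choose j)"
      by simp
  qed
qed

lemma fact_mult_central_binomial: "fact j * (2*j choose j) = 2^j * (\<Prod>i<j. 2*i + 1)"
proof (induction j)
  case (Suc j)
  have "fact (Suc j) * (2 * Suc j choose Suc j) = fact j * (Suc j * (Suc (Suc (2*j)) choose Suc j))"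
    by (simp add: algebra_simps del: binomial_Suc_Suc)
  also have "\<dots> = fact j * (2 * (2*j + 1) * (2*j choose j))"
    by (simp only: Suc_mult_central_binomial_Suc)
  also have "\<dots> = 2 * (2*j + 1) * (fact j * (2*j choose j))"
    by (simp add: algebra_simps)
  finally show ?case
    unfolding Suc.IH by (simp add: algebra_simps)
qed simp

lemma fact_mult_binomial: "j \<le> n \<Longrightarrow> fact j * (n choose j) = (\<Prod>i<j. n - i)"
proof (induction j)
  case (Suc j)
  have "Suc j * (n choose Suc j) = (n - j) * (n choose j)"
    using binomial_absorption[of j n] binomial_absorb_comp[of n j] by simp
  then have "fact (Suc j) * (n choose Suc j) = (n - j) * (fact j * (n choose j))"
    by (simp only: fact_Suc mult_ac of_nat_id)
  then show ?case
    using Suc by simp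
qed simp

lemma prime_not_dvd_binomial:
  assumes "prime p" "n < p" "k \<le> n"
  shows "\<not> p dvd (n choose k)"
proof
  assume "p dvd (n choose k)"
  then have "p dvd fact n"
    using binomial_fact_lemma[OF assms(3)] by (metis dvd_mult_left dvd_trans dvd_triv_right)
  then show False
    using assms(1,2) by (simp add: prime_dvd_fact_iff)
qed

lemma central_binomial_cong:
  assumes "prime p" "p = 2*n+1" "j \<le> n"
  shows "[int (2*j choose j) = (-4)^j * int (n choose j)] (mod int p)"
proof -
  have "[(\<Prod>i<j. 2 * int i + 1) = (\<Prod>i<j. -2 * (int n - int i))] (mod int p)"
  proof (rule cong_prod)
    fix i
    have "2 * int i + 1 - (-2 * (int n - int i)) = int p"
      using assms(2) by simp
    then show "[2 * int i + 1 = -2 * (int n - int i)] (mod int p)"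
      by (simp add: cong_iff_dvd_diff)
  qed
  then have "[2^j * (\<Prod>i<j. 2 * int i + 1) = 2^j * (\<Prod>i<j. -2 * (int n - int i))] (mod int p)"
    by (rule cong_scalar_left)
  moreover have "int (fact j * (2*j choose j)) = 2^j * (\<Prod>i<j. 2 * int i + 1)"
    unfolding fact_mult_central_binomial by (simp add: of_nat_prod add.commute)
  moreover have "int (fact j) * ((-4)^j * int (n choose j)) = 2^j * (\<Prod>i<j. -2 * (int n - int i))"
  proof -
    have "int (fact j * (n choose j)) = (\<Prod>i<j. int n - int i)"
      unfolding fact_mult_binomial[OF assms(3)] using assms(3) by (simp add: of_nat_prod of_nat_diff)
    moreover have "(\<Prod>i<j. -2 * (int n - int i)) = (-2)^j * (\<Prod>i<j. int n - int i)"
      by (simp only: prod.distrib prod_constant card_lessThan)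
    moreover have "(-4::int)^j = 2^j * (-2)^j"
      by (simp add: power_mult_distrib[symmetric])
    ultimately show ?thesis
      by (simp add: algebra_simps)
  qed
  ultimately have "[int (fact j) * int (2*j choose j) = int (fact j) * ((-4)^j * int (n choose j))] (mod int p)"
    by simp
  moreover have "coprime (int (fact j)) (int p)"
  proof -
    have "\<not> p dvd fact j"
      using prime_dvd_fact_iff[OF assms(1), of j] assms(2,3) by simp
    then have "\<not> int p dvd int (fact j)"
      by (metis int_dvd_int_iff)
    then show ?thesis
      using prime_imp_coprime[of "int p"] assms(1) by (simp add: coprime_commute)
  qed
  ultimately show ?thesis
    using cong_mult_lcancel by blast
qed

definition central_term :: "nat \<Rightarrow> rat" where
  "central_term j = 4^j / (of_nat (2*j choose j) * (2 * of_nat j + 1)^2)"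

lemma central_term_cong:
  assumes "prime p" "p = 2*n+1" "j < n"
  shows "rat_cong (central_term j) ((-1)^j / (4 * of_nat (n choose j) * of_nat (n - j)^2)) p 1"
proof -
  have pi: "prime (int p)"
    using assms(1) by simp
  have "[(2 * int j + 1)^2 = (-2 * (int n - int j))^2] (mod int p)"
    by (intro cong_pow) (simp add: cong_iff_dvd_diff assms(2))
  then have "[int (2*j choose j) * (2 * int j + 1)^2 = (-4)^j * int (n choose j) * (-2 * (int n - int j))^2] (mod int p)"
    using central_binomial_cong[OF assms(1,2)] assms(3) by (intro cong_mult) auto
  then have "[(-1)^j * (int (2*j choose j) * (2 * int j + 1)^2)
              = (-1)^j * ((-4)^j * int (n choose j) * (-2 * (int n - int j))^2)] (mod int p)"
    by (rule cong_scalar_left)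
  also have "(-1)^j * ((-4)^j * int (n choose j) * (-2 * (int n - int j))^2)
               = ((-1)^j * (-4)^j) * (4 * int (n choose j) * (int n - int j)^2)"
    unfolding power_mult_distrib[of "-2"] by (simp only: mult_ac) simp
  also have "(-1::int)^j * (-4)^j = 4^j"
    by (simp add: power_mult_distrib[symmetric])
  finally have "[4^j * (4 * int (n choose j) * (int n - int j)^2)
                  = (-1)^j * (int (2*j choose j) * (2 * int j + 1)^2)] (mod int p)"
    by (rule cong_sym)
  moreover have "\<not> int p dvd int (2*j choose j) * (2 * int j + 1)^2"
  proof -
    have "\<not> p dvd (2*j choose j)"
      using assms by (intro prime_not_dvd_binomial) auto
    moreover have "\<not> int p dvd 2 * int j + 1"
      using assms(2,3) by (auto dest!: zdvd_imp_le)
    ultimately show ?thesis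
      using pi prime_dvd_power[OF pi] by (auto simp: prime_dvd_mult_iff)
  qed
  moreover have "\<not> int p dvd 4 * int (n choose j) * (int n - int j)^2"
  proof -
    have "\<not> p dvd 2^2"
    proof
      assume "p dvd 2^2"
      then have "p dvd 2"
        by (rule prime_dvd_power[OF assms(1)])
      then have "p \<le> 2"
        by (rule dvd_imp_le) simp
      then show False
        using assms(1,2) by (cases n) auto
    qed
    then have "\<not> int p dvd 4"
      using int_dvd_int_iff[of p 4] by simp
    moreover have "\<not> p dvd (n choose j)"
      using assms by (intro prime_not_dvd_binomial) auto
    moreover have "\<not> int p dvd int n - int j"
      using assms(2,3) by (auto dest!: zdvd_imp_le)
    ultimately show ?thesis
      using pi prime_dvd_power[OF pi] by (auto simp: prime_dvd_mult_iff)
  qed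
  ultimately have "rat_cong (of_int (4^j) / of_int (int (2*j choose j) * (2 * int j + 1)^2))
      (of_int ((-1)^j) / of_int (4 * int (n choose j) * (int n - int j)^2)) p 1"
    by (intro rat_cong_of_int_divide[OF assms(1)])
  then show ?thesis
    unfolding central_term_def using assms(3) by (simp add: of_nat_diff)
qed

section \<open>Factorials modulo a prime\<close>

lemma fact_add_prod: "fact (m + r) = fact m * (\<Prod>i\<in>{1..r}. m + i)"
proof (induction r)
  case (Suc r)
  have "fact (m + Suc r) = (m + Suc r) * fact (m + r)"
    by simp
  also have "\<dots> = fact m * (\<Prod>i\<in>{1..Suc r}. m + i)"
    unfolding Suc by (simp add: prod.cl_ivl_Suc algebra_simps)
  finally show ?case .
qed simp

lemma wilson_reflection:
  assumes "prime p" "m \<le> p - 1"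
  shows "[int (fact (p - 1 - m)) * int (fact m) * (-1)^m = -1] (mod int p)"
  using assms(2)
proof (induction m)
  case 0
  then show ?case
    using wilson_theorem[OF assms(1)] by simp
next
  case (Suc m)
  then have m: "m < p - 1"
    by simp
  have e: "p - 1 - m = Suc (p - 1 - Suc m)"
    using m by simp
  have "int (fact (p - 1 - m)) = int (p - 1 - m) * int (fact (p - 1 - Suc m))"
    unfolding e by (simp only: fact_Suc of_nat_mult) (simp add: e[symmetric])
  moreover have "[int (p - 1 - m) = - int (Suc m)] (mod int p)"
    using m by (simp add: cong_iff_dvd_diff)
  ultimately have "[int (fact (p - 1 - m)) * (int (fact m) * (-1)^m)
      = - int (Suc m) * int (fact (p - 1 - Suc m)) * (int (fact m) * (-1)^m)] (mod int p)"
    by (simp add: cong_scalar_right)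
  moreover have "- int (Suc m) * int (fact (p - 1 - Suc m)) * (int (fact m) * (-1)^m)
      = int (fact (p - 1 - Suc m)) * int (fact (Suc m)) * (-1)^Suc m"
    by (simp add: algebra_simps)
  moreover have "[int (fact (p - 1 - m)) * (int (fact m) * (-1)^m) = -1] (mod int p)"
    using Suc.IH m by (simp add: mult.assoc)
  ultimately show ?case
    using cong_trans cong_sym by metis
qed

text \<open>Each full block of \<open>p - 1\<close> consecutive units contributes \<open>(p - 1)! \<equiv> -1\<close> by Wilson's theorem.\<close>

lemma fact_prime_mult_add:
  assumes "prime p" "r < p"
  shows "\<exists>u. fact (c*p + r) = fact c * p^c * u \<and> [int u = (-1)^c * int (fact r)] (mod int p)"
  using assms(2)
proof (induction c arbitrary: r)
  case 0
  then show ?case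
    by simp
next
  case (Suc c)
  obtain u where u: "fact (c*p + (p - 1)) = fact c * p^c * u" "[int u = (-1)^c * int (fact (p - 1))] (mod int p)"
    using Suc.IH[of "p - 1"] assms(1) by (auto simp: prime_gt_0_nat)
  define P where "P = (\<Prod>i\<in>{1..r}. Suc c * p + i)"
  have e: "Suc c * p = Suc (c*p + (p - 1))"
    using prime_gt_0_nat[OF assms(1)] by simp
  have "fact (Suc c * p + r) = fact (Suc c * p) * P"
    unfolding P_def by (rule fact_add_prod)
  also have "fact (Suc c * p) = Suc c * p * fact (c*p + (p - 1))"
    unfolding e by (simp only: fact_Suc of_nat_id)
  finally have factor: "fact (Suc c * p + r) = fact (Suc c) * p^Suc c * (u * P)"
    unfolding u(1) by (simp add: algebra_simps)
  have "[int P = int (fact r)] (mod int p)"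
  proof -
    have "[(\<Prod>i\<in>{1..r}. int (Suc c * p + i)) = (\<Prod>i\<in>{1..r}. int i)] (mod int p)"
      by (rule cong_prod) (simp add: cong_iff_dvd_diff)
    then show ?thesis
      unfolding P_def by (simp add: fact_prod of_nat_prod)
  qed
  moreover have "[int u = (-1)^Suc c] (mod int p)"
  proof -
    have "[int (fact (p - 1)) = -1] (mod int p)"
      using wilson_theorem[OF assms(1)] by simp
    then have "[(-1)^c * int (fact (p - 1)) = (-1)^c * -1] (mod int p)"
      by (rule cong_scalar_left)
    then show ?thesis
      using cong_trans[OF u(2)] by simp
  qed
  ultimately have "[int (u * P) = (-1)^Suc c * int (fact r)] (mod int p)"
    unfolding of_nat_mult by (metis cong_mult mult.commute)
  with factor show ?case
    by blast
qed

lemma wilson_reflection_odd: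
  assumes "prime p" "2*j + 2 \<le> p"
  shows "[int (fact (p - (2*j + 2))) * int (fact (2*j + 1)) = 1] (mod int p)"
proof -
  have "[int (fact (p - 1 - (2*j + 1))) * int (fact (2*j + 1)) * (-1)^(2*j + 1) = -1] (mod int p)"
    using assms by (intro wilson_reflection) auto
  then have "[- (int (fact (p - (2*j + 2))) * int (fact (2*j + 1))) = - 1] (mod int p)"
    by (simp add: diff_diff_add)
  then show ?thesis
    using cong_minus_minus_iff by blast
qed

lemma wilson_reflection_square:
  assumes "prime p" "j \<le> p - 1"
  shows "[(int (fact (p - Suc j)) * int (fact j))^2 = 1] (mod int p)"
proof -
  have "[int (fact (p - 1 - j)) * int (fact j) * (-1)^j = -1] (mod int p)"
    using assms by (rule wilson_reflection)
  then have "[(int (fact (p - 1 - j)) * int (fact j) * (-1)^j)^2 = (-1)^2] (mod int p)"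
    by (rule cong_pow)
  then show ?thesis
    by (simp add: power_mult_distrib power_mult[symmetric] mult.commute[of _ 2])
qed

lemma two_power_cong:
  assumes "prime p" "p > 2" "2*j + 6 \<le> 8*p"
  shows "[2^(8*p - 2*j - 6) * 4^j = (4::int)] (mod int p)"
proof -
  have "\<not> p dvd 2"
    using assms(2) by (auto dest: dvd_imp_le)
  then have "[2^(p - 1) = 1] (mod p)"
    using fermat_theorem[OF assms(1)] by blast
  then have "[(2::int)^(p - 1) = 1] (mod int p)"
    by (metis cong_int_iff of_nat_1 of_nat_numeral of_nat_power)
  then have "[((2::int)^(p - 1))^8 * 4 = 1^8 * 4] (mod int p)"
    by (intro cong_mult cong_pow cong_refl)
  moreover have "(2::int)^(8*p - 2*j - 6) * 4^j = (2^(p - 1))^8 * 4"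
  proof -
    have "8*p - 2*j - 6 + 2*j = 8*(p - 1) + 2"
      using assms by simp
    then have "(2::int)^(8*p - 2*j - 6) * 2^(2*j) = 2^(8*(p - 1) + 2)"
      by (metis power_add)
    moreover have "(4::int)^j = 2^(2*j)"
      by (simp add: power_mult)
    moreover have "(2::int)^(8*(p - 1) + 2) = (2^(p - 1))^8 * 4"
      by (simp add: power_add power_mult mult.commute)
    ultimately show ?thesis
      by simp
  qed
  ultimately show ?thesis
    by simp
qed

section \<open>The summand \<open>G p k\<close> modulo \<open>p^4\<close>\<close>

lemma G_factorisation:
  assumes "0 < p" "k \<le> p" "2*k \<le> p"
    and "fact p = p * u\<^sub>0" "fact (2*p) = 2 * p^2 * u\<^sub>1" "fact (2*p + 2*k) = 2 * p^2 * u\<^sub>2"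
    and "fact (p + k) = p * u\<^sub>3" "fact (2*p - 2*k) = p * u\<^sub>4"
  shows "G p k = of_nat (p^3) * (of_nat (4 * u\<^sub>1 * u\<^sub>2 * u\<^sub>4 * fact k)
           / of_nat (u\<^sub>0^3 * u\<^sub>3 * fact (p - k)^2 * 2^(8*p - 2*k - 4) * (2*p + 2*k - 1) * fact (2*k)))"
proof -
  have binom: "(of_nat (a choose b) :: rat) = fact a / (fact b * fact (a - b))" if "b \<le> a" for a b
    using binomial_fact[OF that] .
  have facts: "(fact p :: rat) = of_nat p * of_nat u\<^sub>0" "(fact (2*p) :: rat) = 2 * of_nat p^2 * of_nat u\<^sub>1"
      "(fact (2*p + 2*k) :: rat) = 2 * of_nat p^2 * of_nat u\<^sub>2" "(fact (p + k) :: rat) = of_nat p * of_nat u\<^sub>3"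
      "(fact (2*p - 2*k) :: rat) = of_nat p * of_nat u\<^sub>4"
    using assms(4-8)[THEN arg_cong[where f = "of_nat :: nat \<Rightarrow> rat"]] by simp_all
  have "u\<^sub>0 \<noteq> 0" "u\<^sub>3 \<noteq> 0"
    using assms(4,7) by (metis fact_nonzero mult_0_right)+
  then have nonzero: "(of_nat p :: rat) \<noteq> 0" "(of_nat u\<^sub>0 :: rat) \<noteq> 0" "(of_nat u\<^sub>3 :: rat) \<noteq> 0"
      "(fact (p - k) :: rat) \<noteq> 0" "(fact k :: rat) \<noteq> 0" "(fact (2*k) :: rat) \<noteq> 0"
      "(2^(8*p - 2*k - 4) :: rat) \<noteq> 0" "(of_nat (2*p + 2*k - 1) :: rat) \<noteq> 0"
    using assms(1) by simp_all
  have field: "P^2 * ((2*P^2*U\<^sub>1) / ((P*U\<^sub>0) * (P*U\<^sub>0))) * ((2*P^2*U\<^sub>2) / ((P*U\<^sub>3) * (P*U\<^sub>3)))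
        * ((P*U\<^sub>4) / (F*F)) * ((P*U\<^sub>3) / ((P*U\<^sub>0) * K)) / (T * E * (K\<^sub>2 / (K*K)))
      = P^3 * (4 * U\<^sub>1 * U\<^sub>2 * U\<^sub>4 * K / (U\<^sub>0^3 * U\<^sub>3 * F^2 * T * E * K\<^sub>2))"
    if "P \<noteq> 0" "U\<^sub>0 \<noteq> 0" "U\<^sub>3 \<noteq> 0" "F \<noteq> 0" "K \<noteq> 0" "K\<^sub>2 \<noteq> 0" "T \<noteq> 0" "E \<noteq> 0"
    for P U\<^sub>0 U\<^sub>1 U\<^sub>2 U\<^sub>3 U\<^sub>4 F K K\<^sub>2 T E :: rat
    using that by (simp add: field_simps power2_eq_square power3_eq_cube)
  have "2*p - 2*k - (p - k) = p - k" "2*p + 2*k - (p + k) = p + k" "2*p - p = p" "p + k - p = k" "2*k - k = k"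
    using assms(2,3) by auto
  then have "G p k = of_nat p^2 * (fact (2*p) / (fact p * fact p)) * (fact (2*p + 2*k) / (fact (p + k) * fact (p + k)))
      * (fact (2*p - 2*k) / (fact (p - k) * fact (p - k))) * (fact (p + k) / (fact p * fact k))
      / (2^(8*p - 2*k - 4) * of_nat (2*p + 2*k - 1) * (fact (2*k) / (fact k * fact k)))"
    unfolding G_def using assms(2,3) by (simp add: binomial_fact add.commute)
  also have "\<dots> = of_nat (p^3) * (of_nat (4 * u\<^sub>1 * u\<^sub>2 * u\<^sub>4 * fact k)
           / of_nat (u\<^sub>0^3 * u\<^sub>3 * fact (p - k)^2 * 2^(8*p - 2*k - 4) * (2*p + 2*k - 1) * fact (2*k)))"
    unfolding facts field[OF nonzero] by simp
  finally show ?thesis .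
qed

lemma central_term_eq_fact:
  "central_term j = 4^j * fact j^2 / (fact (2*j + 1) * (2 * of_nat j + 1))"
proof -
  have "(of_nat (2*j choose j) :: rat) = fact (2*j) / (fact j * fact j)"
    using binomial_fact[of j "2*j"] by (simp add: mult_2)
  moreover have "(fact (2*j + 1) :: rat) = (2 * of_nat j + 1) * fact (2*j)"
    by simp
  moreover have "(2 * of_nat j + 1 :: rat) \<noteq> 0"
    by (metis add_pos_nonneg less_numeral_extra(1) of_nat_0_le_iff mult_nonneg_nonneg zero_le_numeral
        add.commute less_irrefl)
  moreover have "4^j / ((F\<^sub>2 / (F * F)) * S^2) = 4^j * F^2 / ((S * F\<^sub>2) * S)"
    if "F \<noteq> 0" "F\<^sub>2 \<noteq> 0" "S \<noteq> 0" for F F\<^sub>2 S :: rat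
    using that by (simp add: field_simps power2_eq_square)
  ultimately show ?thesis
    unfolding central_term_def by simp
qed

lemma G_unit_part_cong:
  assumes "prime p" "p > 2" "k = Suc j" "2*k < p"
    and "[int u\<^sub>0 = -1] (mod int p)" "[int u\<^sub>1 = 1] (mod int p)" "[int u\<^sub>2 = int (fact (2*k))] (mod int p)"
    and "[int u\<^sub>3 = - int (fact k)] (mod int p)" "[int u\<^sub>4 = - int (fact (p - 2*k))] (mod int p)"
  shows "[int (4 * u\<^sub>1 * u\<^sub>2 * u\<^sub>4 * fact k) * (int (fact (2*j + 1)) * (2 * int j + 1))
          = - (4^j * int (fact j)^2)
            * int (u\<^sub>0^3 * u\<^sub>3 * fact (p - k)^2 * 2^(8*p - 2*k - 4) * (2*p + 2*k - 1) * fact (2*k))] (mod int p)"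
    (is "[?lhs = ?rhs] (mod _)")
proof -
  define Q where "Q = - 4 * int (fact (2*k)) * int (fact k) * (2 * int j + 1)"
  have "p - 2*k = p - (2*j + 2)" "p - k = p - Suc j" "8*p - 2*k - 4 = 8*p - 2*j - 6"
    using assms(3) by simp_all
  have "int (2*p + 2*k - 1) - (2 * int j + 1) = int p * 2"
    using assms(3) by simp
  then have shift: "[int (2*p + 2*k - 1) = 2 * int j + 1] (mod int p)"
    unfolding cong_iff_dvd_diff by (metis dvd_triv_left)
  have "[?lhs = 4 * 1 * int (fact (2*k)) * (- int (fact (p - 2*k))) * int (fact k) * (int (fact (2*j + 1)) * (2 * int j + 1))] (mod int p)"
    unfolding of_nat_mult of_nat_numeral by (intro cong_mult cong_refl assms(6,7,9))
  also have "4 * 1 * int (fact (2*k)) * (- int (fact (p - 2*k))) * int (fact k) * (int (fact (2*j + 1)) * (2 * int j + 1))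
      = Q * (int (fact (p - (2*j + 2))) * int (fact (2*j + 1)))"
    unfolding Q_def \<open>p - 2*k = p - (2*j + 2)\<close> by (simp add: algebra_simps del: fact_Suc)
  also have "[Q * (int (fact (p - (2*j + 2))) * int (fact (2*j + 1))) = Q * 1] (mod int p)"
    by (rule cong_scalar_left, rule wilson_reflection_odd) (use assms(1,3,4) in auto)
  finally have lhs: "[?lhs = Q] (mod int p)"
    by simp
  define R where "R = - int (fact (2*k)) * int (fact k) * (2 * int j + 1)"
  have "[?rhs = - (4^j * int (fact j)^2) * ((-1)^3 * (- int (fact k)) * int (fact (p - k))^2 * 2^(8*p - 2*k - 4)
                 * (2 * int j + 1) * int (fact (2*k)))] (mod int p)"
    unfolding of_nat_mult of_nat_power of_nat_numeral of_nat_add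
    by (intro cong_mult cong_refl cong_pow assms(5,8) shift)
  also have "- (4^j * int (fact j)^2) * ((-1)^3 * (- int (fact k)) * int (fact (p - k))^2 * 2^(8*p - 2*k - 4)
                 * (2 * int j + 1) * int (fact (2*k)))
      = R * (2^(8*p - 2*j - 6) * 4^j) * (int (fact (p - Suc j)) * int (fact j))^2"
    unfolding R_def \<open>p - k = p - Suc j\<close> \<open>8*p - 2*k - 4 = 8*p - 2*j - 6\<close>
    by (simp add: algebra_simps power2_eq_square del: fact_Suc)
  also have "[R * (2^(8*p - 2*j - 6) * 4^j) * (int (fact (p - Suc j)) * int (fact j))^2 = R * 4 * 1] (mod int p)"
    using assms(1-4) by (intro cong_mult cong_refl two_power_cong wilson_reflection_square) auto
  finally have rhs: "[?rhs = Q] (mod int p)"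
    unfolding Q_def R_def by (simp add: algebra_simps del: fact_Suc)
  show ?thesis
    using lhs rhs cong_sym cong_trans by blast
qed

lemma G_div_prime_cube_cong:
  assumes "prime p" "2*j + 2 < p"
  shows "rat_cong (G p (Suc j) / of_nat (p^3)) (- central_term j) p 1"
proof -
  define k where "k = Suc j"
  have p: "0 < p" "2 < p" "2*k < p"
    using assms(2) unfolding k_def by simp_all
  have unit_part: "\<exists>u. fact (c*p + r) = fact c * p^c * u \<and> [int u = (-1)^c * int (fact r)] (mod int p)"
    if "r < p" for c r
    using fact_prime_mult_add[OF assms(1) that] .
  obtain u\<^sub>0 where u\<^sub>0: "fact p = p * u\<^sub>0" "[int u\<^sub>0 = -1] (mod int p)"
    using unit_part[of 0 1] p by auto
  obtain u\<^sub>1 where u\<^sub>1: "fact (2*p) = 2 * p^2 * u\<^sub>1" "[int u\<^sub>1 = 1] (mod int p)"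
    using unit_part[of 0 2] p by auto
  obtain u\<^sub>2 where u\<^sub>2: "fact (2*p + 2*k) = 2 * p^2 * u\<^sub>2" "[int u\<^sub>2 = int (fact (2*k))] (mod int p)"
    using unit_part[of "2*k" 2] p by auto
  obtain u\<^sub>3 where u\<^sub>3: "fact (p + k) = p * u\<^sub>3" "[int u\<^sub>3 = - int (fact k)] (mod int p)"
    using unit_part[of k 1] p by auto
  have "1*p + (p - 2*k) = 2*p - 2*k"
    using p by simp
  then obtain u\<^sub>4 where u\<^sub>4: "fact (2*p - 2*k) = p * u\<^sub>4" "[int u\<^sub>4 = - int (fact (p - 2*k))] (mod int p)"
    using unit_part[of "p - 2*k" 1] p by (auto simp: k_def)
  define N where "N = 4 * u\<^sub>1 * u\<^sub>2 * u\<^sub>4 * fact k"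
  define D where "D = u\<^sub>0^3 * u\<^sub>3 * fact (p - k)^2 * 2^(8*p - 2*k - 4) * (2*p + 2*k - 1) * fact (2*k)"
  have G_eq: "G p k / of_nat (p^3) = of_int (int N) / of_int (int D)"
    using G_factorisation[OF p(1) _ _ u\<^sub>0(1) u\<^sub>1(1) u\<^sub>2(1) u\<^sub>3(1) u\<^sub>4(1)] p unfolding N_def D_def by simp
  have central_eq: "- central_term j
      = of_int (- (4^j * int (fact j)^2)) / of_int (int (fact (2*j + 1)) * (2 * int j + 1))"
    unfolding central_term_eq_fact by (simp del: fact_Suc)
  have cong: "[int N * (int (fact (2*j + 1)) * (2 * int j + 1)) = - (4^j * int (fact j)^2) * int D] (mod int p)"
    unfolding N_def D_def using assms(1) p(2) k_def p(3) u\<^sub>0(2) u\<^sub>1(2) u\<^sub>2(2) u\<^sub>3(2) u\<^sub>4(2)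
    by (rule G_unit_part_cong)
  have "\<not> p dvd D"
  proof -
    have "\<not> int p dvd int u\<^sub>0"
      using cong_dvd_iff[OF u\<^sub>0(2)] p(2) by (auto dest: zdvd_imp_le)
    moreover have "\<not> p dvd fact k"
      using p(3) assms(1) by (simp add: prime_dvd_fact_iff)
    then have "\<not> int p dvd int u\<^sub>3"
      using cong_dvd_iff[OF u\<^sub>3(2)] by (metis dvd_minus_iff int_dvd_int_iff)
    moreover have "\<not> p dvd 2*p + 2*k - 1"
    proof -
      have "2*p + 2*k - 1 = 2*j + 1 + p * 2"
        unfolding k_def by simp
      moreover have "\<not> p dvd 2*j + 1"
        using p(3) unfolding k_def by (auto dest: dvd_imp_le)
      ultimately show ?thesis
        by (metis dvd_add_left_iff dvd_triv_left)
    qed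
    moreover have "\<not> p dvd 2"
      using p(2) by (auto dest: dvd_imp_le)
    moreover have "\<not> p dvd fact (p - k)" "\<not> p dvd fact (2*k)"
      using p(3) assms(1) unfolding k_def by (simp_all add: prime_dvd_fact_iff del: fact_Suc)
    ultimately show ?thesis
      unfolding D_def using assms(1) prime_dvd_power[OF assms(1)]
      by (auto simp: prime_dvd_mult_iff)
  qed
  then have nD: "\<not> int p dvd int D"
    by simp
  have "\<not> p dvd fact (2*j + 1)" "\<not> p dvd 2*j + 1"
    using assms by (auto simp: prime_dvd_fact_iff simp del: fact_Suc dest: dvd_imp_le)
  then have "\<not> p dvd fact (2*j + 1) * (2*j + 1)"
    using prime_dvd_mult_iff[OF assms(1)] by blast
  then have "\<not> int p dvd int (fact (2*j + 1) * (2*j + 1))"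
    by (simp only: int_dvd_int_iff not_False_eq_True)
  moreover have "int (fact (2*j + 1) * (2*j + 1)) = int (fact (2*j + 1)) * (2 * int j + 1)"
    by (simp only: of_nat_mult) simp
  ultimately have nd: "\<not> int p dvd int (fact (2*j + 1)) * (2 * int j + 1)"
    by simp
  from rat_cong_of_int_divide[OF assms(1) cong nD nd] show ?thesis
    unfolding k_def[symmetric] G_eq central_eq .
qed

section \<open>Reduction to alternating sums of inverse squares\<close>

lemma sum_reflected_binomial_terms:
  "(\<Sum>j<n. (-1)^j / (4 * of_nat (n choose j) * of_nat (n - j)^2) :: rat)
     = (-1)^n / 4 * (\<Sum>i\<in>{1..n}. (2 * (-1)^i + 1) / of_nat i ^ 2)"
proof -
  have "(\<Sum>j<n. (-1)^j / (4 * of_nat (n choose j) * of_nat (n - j)^2) :: rat)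
      = (\<Sum>i\<in>{1..n}. (-1)^(n - i) / (4 * of_nat (n choose (n - i)) * of_nat (n - (n - i))^2))"
    by (rule sum.reindex_bij_witness[where i = "\<lambda>i. n - i" and j = "\<lambda>j. n - j"]) auto
  also have "\<dots> = (\<Sum>i\<in>{1..n}. (-1)^n / 4 * ((-1)^i / (of_nat i ^ 2 * of_nat (n choose i))))"
  proof (rule sum.cong[OF refl])
    fix i assume i: "i \<in> {1..n}"
    then have "(-1::rat)^(n - i) = (-1)^(n + i)"
      by (simp add: neg_one_power_add_eq_neg_one_power_diff)
    moreover have "n choose (n - i) = n choose i" "n - (n - i) = i"
      using i by (simp_all add: binomial_symmetric[symmetric])
    ultimately show "(-1)^(n - i) / (4 * of_nat (n choose (n - i)) * of_nat (n - (n - i))^2)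
        = (-1)^n / 4 * ((-1)^i / (of_nat i ^ 2 * of_nat (n choose i)) :: rat)"
      by (simp add: power_add field_simps)
  qed
  also have "\<dots> = (-1)^n / 4 * (\<Sum>i\<in>{1..n}. (2 * (-1)^i + 1) / of_nat i ^ 2)"
    by (simp only: sum_distrib_left[symmetric] sum_alternating_over_binomial_div_square)
  finally show ?thesis .
qed

lemma two_power_not_cong_one:
  assumes "prime p" "p > 3"
  shows "\<not> [2^(p - 3) = 1] (mod p)"
proof
  assume "[2^(p - 3) = 1] (mod p)"
  then have "[4 * 2^(p - 3) = 4 * 1] (mod p)"
    by (rule cong_scalar_left)
  moreover have "4 * 2^(p - 3) = (2::nat)^(p - 1)"
  proof -
    have "p - 1 = (p - 3) + 2"
      using assms(2) by simp
    then show ?thesis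
      by (simp add: power_add)
  qed
  moreover have "\<not> p dvd 2"
    using assms(2) by (auto dest: dvd_imp_le)
  then have "[2^(p - 1) = 1] (mod p)"
    by (rule fermat_theorem[OF assms(1)])
  ultimately have "[4 = 1] (mod p)"
    using cong_sym cong_trans by fastforce
  then have "p dvd 3"
    by (simp add: cong_altdef_nat)
  then show False
    using assms(2) by (auto dest: dvd_imp_le)
qed

lemma sum_inverse_squares_cong_zero:
  assumes "prime p" "p = 2*n+1" "p > 3"
  shows "rat_cong (\<Sum>i\<in>{1..n}. 1 / of_nat i ^ 2) 0 p 1"
proof -
  have "rat_cong (\<Sum>i\<in>{1..n}. 1 / of_nat i ^ 2) (\<Sum>i\<in>{1..n}. of_nat i ^ (p - 3)) p 1"
  proof (intro rat_cong_sum[OF assms(1)] rat_cong_inverse_power[OF assms(1)])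
    fix i assume "i \<in> {1..n}"
    then show "\<not> p dvd i"
      using assms(2) by (auto dest: dvd_imp_le)
  qed (use assms(3) in simp)
  moreover have "int p dvd (\<Sum>i\<in>{1..n}. int i ^ (p - 3))"
  proof (rule prime_dvd_power_sum_half[OF assms(1,2)])
    show "even (p - 3)"
      using assms(2,3) by simp
    show "int p dvd (\<Sum>i\<in>{1..p-1}. int i ^ (p - 3))"
      using assms(3) by (intro prime_dvd_power_sum[OF assms(1) _ two_power_not_cong_one[OF assms(1,3)]])
        (auto dest: dvd_imp_le)
  qed
  then have "rat_cong (of_int (\<Sum>i\<in>{1..n}. int i ^ (p - 3))) (of_int 0) p 1"
    using assms(1) by (intro rat_cong_of_int) (simp add: cong_0_iff)
  ultimately show ?thesis
    using assms(1) by (auto intro: rat_cong_trans)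
qed

lemma euler_num_cong_inverse_squares:
  assumes "prime p" "p = 2*n+1" "p > 3"
  shows "rat_cong (of_int (euler_num (p - 3))) ((-1)^n / 2 * (\<Sum>i\<in>{1..n}. (-1)^i / of_nat i ^ 2)) p 1"
proof -
  define A where "A = (\<Sum>i\<in>{1..n}. (-1)^i / of_nat i ^ 2 :: rat)"
  have sign: "p_integral p ((-1)^m)" for m
    using p_integral_of_int[OF assms(1), of "(-1)^m"] by simp
  have p_integral_inverse_square: "p_integral p (1 / of_nat i ^ 2)" if "i \<in> {1..n}" for i
  proof -
    have "\<not> p dvd i"
      using that assms(2) by (auto dest: dvd_imp_le)
    then have "\<not> p dvd i ^ 2"
      using prime_dvd_power[OF assms(1)] by blast
    then show ?thesis
      using p_integral_of_int_divide[of p "int i ^ 2" 1] by (simp add: int_dvd_int_iff[symmetric] del: int_dvd_int_iff)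
  qed
  have "[euler_num (p - 3) = 2^(p - 2) * (-1)^n * (\<Sum>i\<in>{1..n}. (-1)^i * int i ^ (p - 3))] (mod int (p^1))"
    using euler_num_cong_alternating_power_sum[of "p - 3" n] assms(2,3) by (simp add: Suc_diff_Suc numeral_3_eq_3)
  then have "rat_cong (of_int (euler_num (p - 3)))
      (of_int (2^(p - 2) * (-1)^n * (\<Sum>i\<in>{1..n}. (-1)^i * int i ^ (p - 3)))) p 1"
    using assms(1) by (rule rat_cong_of_int)
  moreover have "(of_int (2^(p - 2) * (-1)^n * (\<Sum>i\<in>{1..n}. (-1)^i * int i ^ (p - 3))) :: rat)
      = 2^(p - 2) * ((-1)^n * (\<Sum>i\<in>{1..n}. (-1)^i * of_nat i ^ (p - 3)))"
    by (simp add: of_int_sum mult.assoc)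
  ultimately have "rat_cong (of_int (euler_num (p - 3))) (2^(p - 2) * ((-1)^n * (\<Sum>i\<in>{1..n}. (-1)^i * of_nat i ^ (p - 3)))) p 1"
    by metis
  moreover have "rat_cong (2^(p - 2) * ((-1)^n * (\<Sum>i\<in>{1..n}. (-1)^i * of_nat i ^ (p - 3)))) (1 / 2 * ((-1)^n * A)) p 1"
  proof (rule rat_cong_mult[OF assms(1)])
    show "rat_cong (2^(p - 2)) (1 / 2) p 1"
    proof (rule rat_cong_sym)
      have "\<not> p dvd 2"
        using assms(3) by (auto dest: dvd_imp_le)
      then show "rat_cong (1 / 2) (2^(p - 2)) p 1"
        using rat_cong_inverse_power[OF assms(1), of 2 "p - 2" 1] assms(3) by simp
    qed
    show "rat_cong ((-1)^n * (\<Sum>i\<in>{1..n}. (-1)^i * of_nat i ^ (p - 3))) ((-1)^n * A) p 1"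
      unfolding A_def
    proof (intro rat_cong_mult_left[OF assms(1) sign] rat_cong_sum[OF assms(1)])
      fix i assume i: "i \<in> {1..n}"
      then have "\<not> p dvd i"
        using assms(2) by (auto dest: dvd_imp_le)
      then have "rat_cong (of_nat i ^ (p - 3)) (1 / of_nat i ^ 2) p 1"
        using rat_cong_inverse_power[OF assms(1), of i "p - 3" 2] assms(3) by (simp add: rat_cong_sym)
      then show "rat_cong ((-1)^i * of_nat i ^ (p - 3)) ((-1)^i / of_nat i ^ 2) p 1"
        using rat_cong_mult_left[OF assms(1) sign] by fastforce
    qed
    show "p_integral p (2^(p - 2))"
      using p_integral_of_int[OF assms(1), of "2^(p - 2)"] by simp
    show "p_integral p ((-1)^n * A)"
      unfolding A_def
    proof (intro p_integral_mult[OF assms(1) sign] p_integral_sum[OF assms(1)])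
      fix i assume "i \<in> {1..n}"
      then show "p_integral p ((-1)^i / of_nat i ^ 2)"
        using p_integral_mult[OF assms(1) sign p_integral_inverse_square] by simp
    qed
  qed
  ultimately show ?thesis
    unfolding A_def using assms(1) by (auto intro: rat_cong_trans)
qed

lemma sum_central_term_cong:
  assumes "prime p" "p = 2*n+1" "p > 3"
  shows "rat_cong (\<Sum>j<n. central_term j) ((-1)^n / 2 * (\<Sum>i\<in>{1..n}. (-1)^i / of_nat i ^ 2)) p 1"
proof -
  define A H where "A = (\<Sum>i\<in>{1..n}. (-1)^i / of_nat i ^ 2 :: rat)" and "H = (\<Sum>i\<in>{1..n}. 1 / of_nat i ^ 2 :: rat)"
  have "rat_cong (\<Sum>j<n. central_term j) (\<Sum>j<n. (-1)^j / (4 * of_nat (n choose j) * of_nat (n - j)^2)) p 1"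
    using assms by (intro rat_cong_sum central_term_cong) auto
  also have "(\<Sum>j<n. (-1)^j / (4 * of_nat (n choose j) * of_nat (n - j)^2)) = (-1)^n / 4 * (2 * A + H)"
    unfolding sum_reflected_binomial_terms A_def H_def
    by (simp add: sum_distrib_left sum.distrib[symmetric] add_divide_distrib)
  finally have "rat_cong (\<Sum>j<n. central_term j) ((-1)^n / 4 * (2 * A + H)) p 1" .
  moreover have "rat_cong ((-1)^n / 4 * (2 * A + H)) ((-1)^n / 4 * (2 * A + 0)) p 1"
  proof (rule rat_cong_mult_left[OF assms(1)])
    have "\<not> int p dvd 4"
    proof
      assume "int p dvd 4"
      then have "p dvd 2^2"
        using int_dvd_int_iff[of p 4] by simp
      then have "p dvd 2"
        by (rule prime_dvd_power[OF assms(1)])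
      then show False
        using assms(3) by (auto dest: dvd_imp_le)
    qed
    then show "p_integral p ((-1)^n / 4)"
      using p_integral_of_int_divide[of p 4 "(-1)^n"] by simp
    show "rat_cong (2 * A + H) (2 * A + 0) p 1"
      unfolding H_def using assms by (intro rat_cong_add rat_cong_refl sum_inverse_squares_cong_zero)
  qed
  ultimately show ?thesis
    unfolding A_def using assms(1) by (auto intro: rat_cong_trans)
qed

theorem lemma2p3:
  fixes p :: nat
  assumes "prime p" and "p > 3"
  shows "rat_cong (\<Sum>k\<in>{1..(p - 1) div 2}. G p k)
                  (- (of_nat (p^3) * of_int (euler_num (p - 3)))) p 4"
proof -
  define n where "n = (p - 1) div 2"
  have "odd p"
    using assms by (simp add: prime_odd_nat)
  then have p: "p = 2*n+1"
    unfolding n_def by presburger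
  have "(\<Sum>k\<in>{1..n}. G p k) = of_nat (p^3) * (\<Sum>j<n. G p (Suc j) / of_nat (p^3))"
    using assms(2) by (simp add: sum.atLeast1_atMost_eq sum_distrib_left)
  moreover have "rat_cong (\<Sum>j<n. G p (Suc j) / of_nat (p^3)) (\<Sum>j<n. - central_term j) p 1"
    using assms(1) p by (intro rat_cong_sum G_div_prime_cube_cong) auto
  moreover have "rat_cong (\<Sum>j<n. - central_term j) (- of_int (euler_num (p - 3))) p 1"
    using rat_cong_minus[OF rat_cong_trans[OF assms(1) sum_central_term_cong
          rat_cong_sym[OF euler_num_cong_inverse_squares]]] assms p by (simp add: sum_negf)
  ultimately have "rat_cong (\<Sum>k\<in>{1..n}. G p k) (of_nat (p^3) * - of_int (euler_num (p - 3))) p (1 + 3)"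
    using rat_cong_mult_prime_power rat_cong_trans[OF assms(1)] by metis
  then show ?thesis
    unfolding n_def by simp
qed

end
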